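(* Let $E$ be a finite extension of $\mathbb{Q}_p$ with ring of integers $\mathcal{O}$ and maximal ideal $\lambda$, let $n \ge 1$, let $M = (\mathcal{O}/\lambda^n)^2$ and let $A \in \mathrm{End}_{\mathcal{O}}(M)$ with characteristic polynomial $f_A(X)$. Suppose there exist $\alpha, \beta \in \mathcal{O}/\lambda^n$ such that $f_A(X) = (X-\alpha)(X-\beta)$ and $\alpha - \beta$ is divisible exactly by $\lambda^m$ for some integer $0 \le m \le n-1$. Then there exist $e_1, e_2 \in M$ with $\lambda^{n-m-1}e_1 \neq 0$ and $\lambda^{n-m-1}e_2 \neq 0$ such that $Ae_1 = \alpha e_1$ and $Ae_2 = \beta e_2$. *)

theory Defs
  imports "Jordan_Normal_Form.Char_Poly"
begin

text \<open>A ring O (an integral domain) together with a uniformizer pi is the ring of integers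
of a finite extension of Q_p iff: O is a discrete valuation ring with uniformizer pi
(pi a nonzero non-unit and every nonzero element is a unit times a power of pi),
O is complete for the pi-adic topology, O has characteristic 0, and the residue
field O/(pi) is finite of characteristic p.\<close>

definition is_dvr_uniformizer :: "'a::idom \<Rightarrow> bool" where
  "is_dvr_uniformizer \<pi> \<longleftrightarrow> \<pi> \<noteq> 0 \<and> \<not> \<pi> dvd 1 \<and>
     (\<forall>x. x \<noteq> 0 \<longrightarrow> (\<exists>u k. u dvd 1 \<and> x = u * \<pi> ^ k))"

definition adically_complete :: "'a::idom \<Rightarrow> bool" where
  "adically_complete \<pi> \<longleftrightarrow>
     (\<forall>x :: nat \<Rightarrow> 'a.
        (\<forall>k. \<exists>N. \<forall>i\<ge>N. \<forall>j\<ge>N. \<pi> ^ k dvd (x i - x j)) \<longrightarrow>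
        (\<exists>L. \<forall>k. \<exists>N. \<forall>i\<ge>N. \<pi> ^ k dvd (x i - L)))"

definition p_adic_integer_ring :: "nat \<Rightarrow> 'a::idom \<Rightarrow> bool" where
  "p_adic_integer_ring p \<pi> \<longleftrightarrow>
     prime p \<and> is_dvr_uniformizer \<pi> \<and> adically_complete \<pi> \<and> CHAR('a) = 0 \<and>
     \<pi> dvd of_nat p \<and> finite (UNIV // {(x, y). \<pi> dvd (x - y)})"

text \<open>Congruence modulo lambda^n = (pi^n), i.e. equality in O/lambda^n, for elements,
vectors and polynomials (all given by lifts to O).\<close>

definition cong_pow :: "'a::idom \<Rightarrow> nat \<Rightarrow> 'a \<Rightarrow> 'a \<Rightarrow> bool" where
  "cong_pow \<pi> n x y \<longleftrightarrow> \<pi> ^ n dvd (x - y)"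

definition vec_cong_pow :: "'a::idom \<Rightarrow> nat \<Rightarrow> 'a vec \<Rightarrow> 'a vec \<Rightarrow> bool" where
  "vec_cong_pow \<pi> n v w \<longleftrightarrow> (\<forall>i < dim_vec v. cong_pow \<pi> n (v $ i) (w $ i))"

definition poly_cong_pow :: "'a::idom \<Rightarrow> nat \<Rightarrow> 'a poly \<Rightarrow> 'a poly \<Rightarrow> bool" where
  "poly_cong_pow \<pi> n f g \<longleftrightarrow> (\<forall>i. cong_pow \<pi> n (coeff f i) (coeff g i))"

end

theory Submission
  imports Defs
begin

text \<open>Write A = [[a, b], [c, d]]. If l is a root of the characteristic polynomial modulo
pi^n, the columns (d - l, -c) and (-b, a - l) of the adjugate of A - l are eigenvectors for l
modulo pi^n. Their entries d - l and a - l add up to a + d - 2l, which is congruent to u - l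
for the other root u; so if u - l is not divisible by pi^(m+1), neither is some entry of one
of these columns, and multiplying that column by pi^(n-m-1) keeps it nonzero modulo pi^n.\<close>

lemma det_2x2:
  assumes "(A :: 'a::comm_ring_1 mat) \<in> carrier_mat 2 2"
  shows "det A = A$$(0,0) * A$$(1,1) - A$$(0,1) * A$$(1,0)"
proof -
  have "det A = (\<Sum>i<2. A $$ (i,0) * cofactor A i 0)"
    by (rule laplace_expansion_column[OF assms]) simp
  also have "\<dots> = A $$ (0,0) * cofactor A 0 0 + A $$ (1,0) * cofactor A 1 0"
    by (simp add: numeral_2_eq_2)
  also have "cofactor A 0 0 = A$$(1,1)"
    unfolding cofactor_def using assms by (subst det_single) (auto simp: mat_delete_def)
  also have "cofactor A 1 0 = - A$$(0,1)"
    unfolding cofactor_def using assms by (subst det_single) (auto simp: mat_delete_def)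
  finally show ?thesis by (simp add: algebra_simps)
qed

lemma char_poly_2x2:
  assumes "(A :: 'a::comm_ring_1 mat) \<in> carrier_mat 2 2"
  shows "char_poly A =
    [:A$$(0,0) * A$$(1,1) - A$$(0,1) * A$$(1,0), - (A$$(0,0) + A$$(1,1)), 1:]"
  unfolding char_poly_defs using assms by (subst det_2x2) (auto simp: algebra_simps)

definition vec2 :: "'a::zero \<Rightarrow> 'a \<Rightarrow> 'a vec" where
  "vec2 x y = vec 2 (\<lambda>i. if i = 0 then x else y)"

lemma vec2_carrier [simp]: "vec2 x y \<in> carrier_vec 2"
  by (simp add: vec2_def)

lemma mult_mat_vec2:
  assumes "(A :: 'a::comm_ring_1 mat) \<in> carrier_mat 2 2"
  shows "A *\<^sub>v vec2 x y = vec2 (A$$(0,0) * x + A$$(0,1) * y) (A$$(1,0) * x + A$$(1,1) * y)"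
  using assms
  by (auto simp: vec2_def mult_mat_vec_def scalar_prod_def numeral_2_eq_2 row_def less_Suc_eq
      intro!: eq_vecI)

lemma smult_vec2 [simp]: "c \<cdot>\<^sub>v vec2 x y = vec2 (c * x) (c * y)"
  by (auto simp: vec2_def)

lemma zero_vec2: "0\<^sub>v 2 = vec2 0 0"
  by (auto simp: vec2_def)

lemma vec_cong_pow_vec2:
  "vec_cong_pow \<pi> n (vec2 x y) (vec2 x' y') \<longleftrightarrow> cong_pow \<pi> n x x' \<and> cong_pow \<pi> n y y'"
  by (auto simp: vec_cong_pow_def vec2_def less_Suc_eq numeral_2_eq_2)

lemma cong_pow_poly:
  assumes "poly_cong_pow \<pi> n f g"
  shows "cong_pow \<pi> n (poly f x) (poly g x)"
proof -
  have "poly f x - poly g x = (\<Sum>i\<le>degree (f - g). (coeff f i - coeff g i) * x ^ i)"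
    by (simp only: poly_altdef[of "f - g"] coeff_diff flip: poly_diff)
  also have "\<pi> ^ n dvd \<dots>"
    using assms by (intro dvd_sum dvd_mult2) (simp add: poly_cong_pow_def cong_pow_def)
  finally show ?thesis by (simp add: cong_pow_def)
qed

lemma adjugate_columns_eigen_2x2:
  assumes "(A :: 'a::comm_ring_1 mat) \<in> carrier_mat 2 2"
  shows "A *\<^sub>v vec2 (A$$(1,1) - l) (- A$$(1,0))
           = vec2 (l * (A$$(1,1) - l) + poly (char_poly A) l) (l * (- A$$(1,0)))"
    and "A *\<^sub>v vec2 (- A$$(0,1)) (A$$(0,0) - l)
           = vec2 (l * (- A$$(0,1))) (l * (A$$(0,0) - l) + poly (char_poly A) l)"
  using assms by (simp_all add: mult_mat_vec2 char_poly_2x2 algebra_simps)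

lemma eigen_mod_pow_2x2:
  assumes "(A :: 'a::idom mat) \<in> carrier_mat 2 2"
    and "cong_pow \<pi> n (poly (char_poly A) l) 0"
  shows "vec_cong_pow \<pi> n (A *\<^sub>v vec2 (A$$(1,1) - l) (- A$$(1,0)))
           (l \<cdot>\<^sub>v vec2 (A$$(1,1) - l) (- A$$(1,0)))"
    and "vec_cong_pow \<pi> n (A *\<^sub>v vec2 (- A$$(0,1)) (A$$(0,0) - l))
           (l \<cdot>\<^sub>v vec2 (- A$$(0,1)) (A$$(0,0) - l))"
  using assms(2)
  unfolding adjugate_columns_eigen_2x2[OF assms(1)]
  by (simp_all add: vec_cong_pow_vec2 cong_pow_def)

lemma scaled_vec2_not_cong_zero:
  fixes \<pi> :: "'a::idom"
  assumes "\<pi> \<noteq> 0" "m < n" "\<not> (\<pi> ^ (m + 1) dvd x \<and> \<pi> ^ (m + 1) dvd y)"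
  shows "\<not> vec_cong_pow \<pi> n (\<pi> ^ (n - m - 1) \<cdot>\<^sub>v vec2 x y) (0\<^sub>v 2)"
proof -
  have "\<pi> ^ n = \<pi> ^ (n - m - 1) * \<pi> ^ (m + 1)"
    using assms(2) by (simp flip: power_add del: power_Suc)
  then have "\<pi> ^ n dvd \<pi> ^ (n - m - 1) * z \<longleftrightarrow> \<pi> ^ (m + 1) dvd z" for z
    using assms(1) by simp
  then show ?thesis
    using assms(3) by (simp add: zero_vec2 vec_cong_pow_vec2 cong_pow_def)
qed

lemma eigenvector_mod_pow_2x2:
  fixes \<pi> :: "'a::idom"
  assumes "\<pi> \<noteq> 0" "m < n" "A \<in> carrier_mat 2 2"
    and char: "poly_cong_pow \<pi> n (char_poly A) ([:- l, 1:] * [:- u, 1:])"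
    and "\<not> \<pi> ^ (m + 1) dvd (u - l)"
  shows "\<exists>e. e \<in> carrier_vec 2 \<and> \<not> vec_cong_pow \<pi> n (\<pi> ^ (n - m - 1) \<cdot>\<^sub>v e) (0\<^sub>v 2) \<and>
           vec_cong_pow \<pi> n (A *\<^sub>v e) (l \<cdot>\<^sub>v e)"
proof -
  define a b c d where "a = A$$(0,0)" "b = A$$(0,1)" "c = A$$(1,0)" "d = A$$(1,1)"
  have root: "cong_pow \<pi> n (poly (char_poly A) l) 0"
    using cong_pow_poly[OF char, of l] by simp
  have "cong_pow \<pi> n (coeff (char_poly A) 1) (coeff ([:- l, 1:] * [:- u, 1:]) 1)"
    using char unfolding poly_cong_pow_def by blast
  then have "\<pi> ^ n dvd - (a + d) - (- u - l)"
    using assms(3) by (simp add: cong_pow_def char_poly_2x2 a_b_c_d_def)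
  then have trace: "\<pi> ^ (m + 1) dvd (d - l) + (a - l) - (u - l)"
    using le_imp_power_dvd[of "m + 1" n \<pi>] assms(2) dvd_trans dvd_minus_iff
    by (fastforce simp: algebra_simps)
  have "u - l = (d - l) + (a - l) - ((d - l) + (a - l) - (u - l))"
    by simp
  then have "\<not> (\<pi> ^ (m + 1) dvd d - l \<and> \<pi> ^ (m + 1) dvd a - l)"
    using assms(5) trace by (metis dvd_add dvd_diff)
  then consider "\<not> (\<pi> ^ (m + 1) dvd d - l \<and> \<pi> ^ (m + 1) dvd - c)"
    | "\<not> (\<pi> ^ (m + 1) dvd - b \<and> \<pi> ^ (m + 1) dvd a - l)"
    by blast
  then show ?thesis
    using eigen_mod_pow_2x2[OF assms(3) root] scaled_vec2_not_cong_zero[OF assms(1,2)]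
    unfolding a_b_c_d_def by cases (use vec2_carrier in blast)+
qed

theorem lemma4p1:
  fixes p :: nat and \<pi> :: "'a::idom" and n m :: nat
    and A :: "'a mat" and \<alpha> \<beta> :: 'a
  assumes "p_adic_integer_ring p \<pi>"
    and "n \<ge> 1"
    and "A \<in> carrier_mat 2 2"
    and "poly_cong_pow \<pi> n (char_poly A) ([:- \<alpha>, 1:] * [:- \<beta>, 1:])"
    and "m \<le> n - 1"
    and "\<pi> ^ m dvd (\<alpha> - \<beta>)" and "\<not> \<pi> ^ (m + 1) dvd (\<alpha> - \<beta>)"
  shows "\<exists>e1 e2. e1 \<in> carrier_vec 2 \<and> e2 \<in> carrier_vec 2 \<and>
           \<not> vec_cong_pow \<pi> n ((\<pi> ^ (n - m - 1)) \<cdot>\<^sub>v e1) (0\<^sub>v 2) \<and>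
           \<not> vec_cong_pow \<pi> n ((\<pi> ^ (n - m - 1)) \<cdot>\<^sub>v e2) (0\<^sub>v 2) \<and>
           vec_cong_pow \<pi> n (A *\<^sub>v e1) (\<alpha> \<cdot>\<^sub>v e1) \<and>
           vec_cong_pow \<pi> n (A *\<^sub>v e2) (\<beta> \<cdot>\<^sub>v e2)"
proof -
  have "\<pi> \<noteq> 0"
    using assms(1) by (simp add: p_adic_integer_ring_def is_dvr_uniformizer_def)
  moreover have "m < n"
    using assms(2,5) by simp
  moreover have "\<not> \<pi> ^ (m + 1) dvd (\<beta> - \<alpha>)"
    using assms(7) by (metis dvd_minus_iff minus_diff_eq)
  moreover have "poly_cong_pow \<pi> n (char_poly A) ([:- \<beta>, 1:] * [:- \<alpha>, 1:])"
    using assms(4) by (simp add: mult.commute)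
  ultimately show ?thesis
    using eigenvector_mod_pow_2x2[of \<pi> m n A] assms(3,4,7) by meson
qed

end
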